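(* Let $\lambda \geq 1$, $\mu \geq 0$, $\delta \geq 0$, $t\in\left(\tfrac12,1\right)$ and $\xi=\frac{2\lambda+\mu}{2\lambda+1}$. Let $f(z)=z+\sum_{n=2}^{\infty}a_n z^n$ belong to the class $\mathscr{B}_{\Sigma}^{\mu}(\lambda,\delta,t)$ defined below. Put \[ D:=(\lambda+\mu+2\xi\delta)^2-2\left[2(\lambda+\mu+2\xi\delta)^2-\big((2\lambda+\mu)(\mu+1)+12\xi\delta\big)\right]t^{2},\qquad M:=\frac{|D|}{4(2\lambda+\mu+6\xi\delta)t^{2}}. \] Then for each real number $\eta$, \[ |a_{3}-\eta a_{2}^{2}|\leq \begin{cases} \dfrac{2t}{2\lambda +\mu+6\xi\delta}, & |\eta -1|\leq M,\\[2mm] \dfrac{8|\eta -1|t^{3}}{|D|}, & |\eta -1|\geq M. \end{cases} \]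
   Context: Let $\mathbb{U}=\{z\in\mathbb{C}:|z|<1\}$ and let $\mathcal{A}$ be the class of analytic functions $f$ on $\mathbb{U}$ with $f(0)=0$, $f'(0)=1$, i.e. $f(z)=z+\sum_{n\ge2}a_nz^n$. A function $f\in\mathcal{A}$ is bi-univalent if $f$ is univalent on $\mathbb{U}$ and its inverse $g=f^{-1}$ (defined near $0$, with $f^{-1}(f(z))=z$, and $g(w)=w-a_2w^2+(2a_2^2-a_3)w^3-\cdots$) extends to a univalent function on $\mathbb{U}$; $\Sigma$ denotes the class of such $f$. For analytic $F,G$ on $\mathbb{U}$, $F\prec G$ (subordination) means there is an analytic $\omega$ on $\mathbb{U}$ with $\omega(0)=0$, $|\omega(z)|<1$ and $F=G\circ\omega$. The Chebyshev polynomials of the second kind are $U_0(t)=1$, $U_1(t)=2t$, $U_{n+1}(t)=2tU_n(t)-U_{n-1}(t)$, with generating function $H(z,t)=\frac{1}{1-2tz+z^2}=\sum_{n\ge0}U_n(t)z^n$. For $\lambda\ge1,\mu\ge0,\delta\ge0$, $t\in(\frac12,1)$ and $\xi=\frac{2\lambda+\mu}{2\lambda+1}$, the class $\mathscr{B}_{\Sigma}^{\mu}(\lambda,\delta,t)$ consists of all $f\in\Sigma$ such that, with $g=f^{-1}$, \[ (1-\lambda)\left(\tfrac{f(z)}{z}\right)^{\mu}+\lambda f'(z)\left(\tfrac{f(z)}{z}\right)^{\mu-1}+\xi\delta z f''(z)\prec H(z,t) \] and \[ (1-\lambda)\left(\tfrac{g(w)}{w}\right)^{\mu}+\lambda g'(w)\left(\tfrac{g(w)}{w}\right)^{\mu-1}+\xi\delta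 w g''(w)\prec H(w,t), \] where powers are taken with the principal branch equal to $1$ at the origin. *)

theory Defs
  imports "HOL-Analysis.Analysis"
begin

definition normalized_analytic :: "(complex \<Rightarrow> complex) \<Rightarrow> bool" where
  "normalized_analytic f \<longleftrightarrow> f holomorphic_on ball 0 1 \<and> f 0 = 0 \<and> deriv f 0 = 1"

definition univalent_inverse_ext :: "(complex \<Rightarrow> complex) \<Rightarrow> (complex \<Rightarrow> complex) \<Rightarrow> bool" where
  "univalent_inverse_ext f g \<longleftrightarrow> g holomorphic_on ball 0 1 \<and> inj_on g (ball 0 1) \<and> g 0 = 0 \<and>
     (\<exists>r>0. \<forall>w\<in>ball 0 r. f (g w) = w)"

definition bi_univalent :: "(complex \<Rightarrow> complex) \<Rightarrow> bool" where
  "bi_univalent f \<longleftrightarrow> normalized_analytic f \<and> inj_on f (ball 0 1) \<and>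
     (\<exists>g. univalent_inverse_ext f g)"

definition subordinate :: "(complex \<Rightarrow> complex) \<Rightarrow> (complex \<Rightarrow> complex) \<Rightarrow> bool" where
  "subordinate F G \<longleftrightarrow> (\<exists>\<omega>. \<omega> holomorphic_on ball 0 1 \<and> \<omega> 0 = 0 \<and>
     (\<forall>z\<in>ball 0 1. norm (\<omega> z) < 1 \<and> F z = G (\<omega> z)))"

text \<open>Generating function of Chebyshev polynomials of the second kind.\<close>
definition cheb_H :: "real \<Rightarrow> complex \<Rightarrow> complex" where
  "cheb_H t z = 1 / (1 - 2 * complex_of_real t * z + z ^ 2)"

text \<open>L is the branch of log(h(z)/z) on the disc vanishing at 0 (principal branch of powers
  equal to 1 at the origin: (h(z)/z)^a := exp(a * L z)).\<close>
definition quotient_log :: "(complex \<Rightarrow> complex) \<Rightarrow> (complex \<Rightarrow> complex) \<Rightarrow> bool" where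
  "quotient_log h L \<longleftrightarrow> L holomorphic_on ball 0 1 \<and> L 0 = 0 \<and>
     (\<forall>z\<in>ball 0 1. z \<noteq> 0 \<longrightarrow> exp (L z) = h z / z)"

definition xi_par :: "real \<Rightarrow> real \<Rightarrow> real" where
  "xi_par lam \<mu> = (2 * lam + \<mu>) / (2 * lam + 1)"

definition B_op :: "real \<Rightarrow> real \<Rightarrow> real \<Rightarrow> (complex \<Rightarrow> complex) \<Rightarrow> (complex \<Rightarrow> complex)
    \<Rightarrow> complex \<Rightarrow> complex" where
  "B_op lam \<mu> \<delta> h L z =
     (1 - complex_of_real lam) * exp (complex_of_real \<mu> * L z)
     + complex_of_real lam * deriv h z * exp (complex_of_real (\<mu> - 1) * L z)
     + complex_of_real (xi_par lam \<mu> * \<delta>) * z * (deriv ^^ 2) h z"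

definition B_subord :: "real \<Rightarrow> real \<Rightarrow> real \<Rightarrow> real \<Rightarrow> (complex \<Rightarrow> complex) \<Rightarrow> bool" where
  "B_subord lam \<mu> \<delta> t h \<longleftrightarrow>
     (\<exists>L. quotient_log h L \<and> subordinate (B_op lam \<mu> \<delta> h L) (cheb_H t))"

definition B_class :: "real \<Rightarrow> real \<Rightarrow> real \<Rightarrow> real \<Rightarrow> (complex \<Rightarrow> complex) set" where
  "B_class \<mu> lam \<delta> t = {f. bi_univalent f \<and>
     (\<exists>g. univalent_inverse_ext f g \<and> B_subord lam \<mu> \<delta> t f \<and> B_subord lam \<mu> \<delta> t g)}"

definition coeff_a :: "(complex \<Rightarrow> complex) \<Rightarrow> nat \<Rightarrow> complex" where
  "coeff_a f n = (deriv ^^ n) f 0 / of_nat (fact n)"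

end

theory Submission
  imports Defs "HOL-Complex_Analysis.Complex_Analysis"
begin

text \<open>
  Let \<open>\<omega>\<close> and \<open>\<nu>\<close> be the Schwarz functions of the two subordinations, with
  \<open>\<omega>(z) = c\<^sub>1 z + c\<^sub>2 z\<^sup>2 + \<dots>\<close> and \<open>\<nu>(w) = d\<^sub>1 w + d\<^sub>2 w\<^sup>2 + \<dots>\<close>; Cauchy's estimate gives
  \<open>|c\<^sub>2|, |d\<^sub>2| \<le> 1\<close>. Since \<open>H(z,t) = 1 + 2t z + (4t\<^sup>2 - 1) z\<^sup>2 + \<dots>\<close>, comparing the
  first two Taylor coefficients of both sides of the subordinations yields
  \<open>A a\<^sub>2 = 2t c\<^sub>1\<close> and \<open>B a\<^sub>3 + C a\<^sub>2\<^sup>2 = (4t\<^sup>2 - 1) c\<^sub>1\<^sup>2 + 2t c\<^sub>2\<close> with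
  \<open>A = \<lambda> + \<mu> + 2\<xi>\<delta>\<close>, \<open>B = 2\<lambda> + \<mu> + 6\<xi>\<delta>\<close>, \<open>C = (2\<lambda> + \<mu>)(\<mu> - 1)/2\<close>, and the same
  relations for \<open>g = f\<^sup>-\<^sup>1\<close>, whose second and third coefficients are \<open>-a\<^sub>2\<close> and \<open>2a\<^sub>2\<^sup>2 - a\<^sub>3\<close>.
  Subtracting and adding the second-order relations gives
  \<open>B(a\<^sub>3 - a\<^sub>2\<^sup>2) = t(c\<^sub>2 - d\<^sub>2)\<close> and \<open>D a\<^sub>2\<^sup>2 = 4t\<^sup>3(c\<^sub>2 + d\<^sub>2)\<close>, so
  \<open>a\<^sub>3 - \<eta> a\<^sub>2\<^sup>2 = t((k + 1/B) c\<^sub>2 + (k - 1/B) d\<^sub>2)\<close> with \<open>k = 4t\<^sup>2(1 - \<eta>)/D\<close>, whose modulus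
  is at most \<open>t(|k + 1/B| + |k - 1/B|) = 2t max |k| (1/B)\<close>.
\<close>

lemma deriv_compose_holomorphic:
  fixes f g :: "complex \<Rightarrow> complex"
  assumes "open S" "open T" "g holomorphic_on S" "f holomorphic_on T" "g ` S \<subseteq> T" "z \<in> S"
  shows "deriv (\<lambda>x. f (g x)) z = deriv f (g z) * deriv g z"
  using assms by (intro deriv_compose_analytic) (auto simp: analytic_at)

lemma higher_deriv2_compose_holomorphic:
  fixes f g :: "complex \<Rightarrow> complex"
  assumes "open S" "open T" "g holomorphic_on S" "f holomorphic_on T" "g ` S \<subseteq> T" "z \<in> S"
  shows "(deriv ^^ 2) (\<lambda>x. f (g x)) z
           = (deriv ^^ 2) f (g z) * (deriv g z)^2 + deriv f (g z) * (deriv ^^ 2) g z"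
proof -
  have df: "(\<lambda>x. deriv f (g x)) holomorphic_on S"
    using assms by (intro holomorphic_deriv_compose)
  have dg: "deriv g holomorphic_on S"
    using assms by (intro holomorphic_deriv)
  have "deriv (deriv (\<lambda>x. f (g x))) z = deriv (\<lambda>x. deriv f (g x) * deriv g x) z"
    using assms
    by (intro deriv_cong_ev refl eventually_mono[OF eventually_nhds_in_open[of S z]]
          deriv_compose_holomorphic[of S T]) auto
  also have "\<dots> = deriv f (g z) * deriv (deriv g) z + deriv (\<lambda>x. deriv f (g x)) z * deriv g z"
    using assms df dg by (simp add: holomorphic_on_imp_differentiable_at)
  also have "deriv (\<lambda>x. deriv f (g x)) z = deriv (deriv f) (g z) * deriv g z"
    using assms by (intro deriv_compose_holomorphic[of S T] holomorphic_deriv)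
  finally show ?thesis
    by (simp add: numeral_2_eq_2 power2_eq_square algebra_simps)
qed

lemma higher_deriv3_compose_holomorphic:
  fixes f g :: "complex \<Rightarrow> complex"
  assumes "open S" "open T" "g holomorphic_on S" "f holomorphic_on T" "g ` S \<subseteq> T" "z \<in> S"
  shows "(deriv ^^ 3) (\<lambda>x. f (g x)) z = (deriv ^^ 3) f (g z) * (deriv g z)^3
           + 3 * (deriv ^^ 2) f (g z) * deriv g z * (deriv ^^ 2) g z
           + deriv f (g z) * (deriv ^^ 3) g z"
proof -
  have df: "(\<lambda>x. deriv f (g x)) holomorphic_on S"
    by (rule holomorphic_deriv_compose[OF assms(4,3,5,2)])
  have dg: "deriv g holomorphic_on S"
    by (rule holomorphic_deriv[OF assms(3,1)])
  have fg: "(\<lambda>x. f (g x)) holomorphic_on S"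
    using holomorphic_on_compose_gen[OF assms(3-5)] by (simp add: o_def)
  have "(deriv ^^ 3) F = (deriv ^^ 2) (deriv F)" for F :: "complex \<Rightarrow> complex"
    by (simp add: numeral_3_eq_3 numeral_2_eq_2)
  then have "(deriv ^^ 3) (\<lambda>x. f (g x)) z = (deriv ^^ 2) (deriv (\<lambda>x. f (g x))) z"
    by simp
  also have "\<dots> = (deriv ^^ 2) (\<lambda>x. deriv f (g x) * deriv g x) z"
    by (rule higher_deriv_transform_within_open[OF holomorphic_deriv[OF fg assms(1)]
          holomorphic_on_mult[OF df dg] assms(1,6) deriv_compose_holomorphic[OF assms(1-5)]])
  also have "\<dots> = (\<Sum>i = 0..2. of_nat (2 choose i) * (deriv ^^ i) (\<lambda>x. deriv f (g x)) z
                                   * (deriv ^^ (2 - i)) (deriv g) z)"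
    by (rule higher_deriv_mult[OF df dg assms(1,6)])
  also have "\<dots> = deriv f (g z) * (deriv ^^ 2) (deriv g) z
                  + 2 * deriv (\<lambda>x. deriv f (g x)) z * deriv (deriv g) z
                  + (deriv ^^ 2) (\<lambda>x. deriv f (g x)) z * deriv g z"
    by (simp add: numeral_2_eq_2)
  also have "deriv (\<lambda>x. deriv f (g x)) z = deriv (deriv f) (g z) * deriv g z"
    by (rule deriv_compose_holomorphic[OF assms(1,2,3) holomorphic_deriv[OF assms(4,2)] assms(5,6)])
  also have "(deriv ^^ 2) (\<lambda>x. deriv f (g x)) z
               = (deriv ^^ 2) (deriv f) (g z) * (deriv g z)^2 + deriv (deriv f) (g z) * (deriv ^^ 2) g z"
    by (rule higher_deriv2_compose_holomorphic[OF assms(1,2,3) holomorphic_deriv[OF assms(4,2)] assms(5,6)])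
  finally show ?thesis
    by (simp add: numeral_3_eq_3 numeral_2_eq_2 power2_eq_square power3_eq_cube algebra_simps)
qed

lemma self_map_disc_higher_deriv_bound:
  fixes \<omega> :: "complex \<Rightarrow> complex"
  assumes hol: "\<omega> holomorphic_on ball 0 1" and bd: "\<And>z. z \<in> ball 0 1 \<Longrightarrow> norm (\<omega> z) \<le> 1"
  shows "norm ((deriv ^^ n) \<omega> 0) \<le> fact n"
proof (rule tendsto_lowerbound)
  show "((\<lambda>r. fact n / r ^ n) \<longlongrightarrow> fact n) (at_left (1::real))"
    by (auto intro!: tendsto_eq_intros)
  show "\<forall>\<^sub>F r in at_left 1. norm ((deriv ^^ n) \<omega> 0) \<le> fact n / r ^ n"
  proof (rule eventually_mono[OF eventually_at_left_real[of 0 1]])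
    fix r :: real assume r: "r \<in> {0<..<1}"
    have "norm ((deriv ^^ n) \<omega> 0) \<le> fact n * 1 / r ^ n"
    proof (rule Cauchy_inequality)
      show "\<omega> holomorphic_on ball 0 r"
        using r by (auto intro: holomorphic_on_subset[OF hol])
      show "continuous_on (cball 0 r) \<omega>"
        using r by (auto intro: continuous_on_subset[OF holomorphic_on_imp_continuous_on[OF hol]])
      show "\<And>z. norm (0 - z) = r \<Longrightarrow> norm (\<omega> z) \<le> 1"
        using r bd by simp
    qed (use r in simp)
    then show "norm ((deriv ^^ n) \<omega> 0) \<le> fact n / r ^ n" by simp
  qed simp
qed simp

lemma cheb_denominator_nonzero:
  assumes "\<bar>t\<bar> \<le> 1" "norm w < 1"
  shows "1 - 2 * complex_of_real t * w + w^2 \<noteq> 0"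
proof
  assume root: "1 - 2 * complex_of_real t * w + w^2 = 0"
  have re: "1 - 2 * t * Re w + (Re w)^2 - (Im w)^2 = 0"
    using arg_cong[OF root, of Re] by (simp add: power2_eq_square)
  have im: "Im w * (Re w - t) = 0"
    using arg_cong[OF root, of Im] by (simp add: power2_eq_square algebra_simps)
  have disc: "(Re w)^2 + (Im w)^2 < 1"
    using assms(2) by (simp add: cmod_def)
  have t: "t^2 \<le> 1"
    using assms(1) by (simp add: abs_square_le_1)
  consider "Im w = 0" | "Re w = t"
    using im by auto
  then show False
  proof cases
    case 1
    then have "(Re w - t)^2 + (1 - t^2) = 0"
      using re by (simp add: power2_eq_square algebra_simps)
    then have "(Re w - t)^2 = 0" "t^2 = 1"
      using t zero_le_power2[of "Re w - t"] by linarith+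
    then show False
      using disc 1 by simp
  next
    case 2
    then show False
      using re disc by (simp add: power2_eq_square algebra_simps)
  qed
qed

lemma cheb_H_has_field_derivative:
  assumes "1 - 2 * complex_of_real t * w + w^2 \<noteq> 0"
  shows "(cheb_H t has_field_derivative
           (2 * complex_of_real t - 2 * w) / (1 - 2 * complex_of_real t * w + w^2)^2) (at w)"
  unfolding cheb_H_def[abs_def] using assms
  by (auto intro!: derivative_eq_intros simp: power2_eq_square field_simps)

lemma holomorphic_cheb_H: "\<bar>t\<bar> \<le> 1 \<Longrightarrow> cheb_H t holomorphic_on ball 0 1"
  unfolding cheb_H_def by (intro holomorphic_intros) (simp add: cheb_denominator_nonzero)

lemma deriv_cheb_H_0: "deriv (cheb_H t) 0 = 2 * complex_of_real t"
  using cheb_H_has_field_derivative[of t 0] by (simp add: DERIV_imp_deriv)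

lemma higher_deriv2_cheb_H_0:
  assumes "\<bar>t\<bar> \<le> 1"
  shows "(deriv ^^ 2) (cheb_H t) 0 = 2 * (4 * complex_of_real t ^ 2 - 1)"
proof -
  have "deriv (deriv (cheb_H t)) 0
          = deriv (\<lambda>w. (2 * complex_of_real t - 2 * w) / (1 - 2 * complex_of_real t * w + w^2)^2) 0"
    using assms
    by (intro deriv_cong_ev refl eventually_mono[OF eventually_nhds_in_open[of "ball 0 1" 0]]
          DERIV_imp_deriv cheb_H_has_field_derivative cheb_denominator_nonzero) auto
  also have "\<dots> = 2 * (4 * complex_of_real t ^ 2 - 1)"
    by (rule DERIV_imp_deriv) (auto intro!: derivative_eq_intros simp: power2_eq_square algebra_simps)
  finally show ?thesis by (simp add: numeral_2_eq_2)
qed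

lemma subordinate_cheb_H_coeffs:
  fixes F :: "complex \<Rightarrow> complex"
  assumes "subordinate F (cheb_H t)" "\<bar>t\<bar> \<le> 1"
  obtains c1 c2 where "norm c2 \<le> 1" "deriv F 0 = 2 * complex_of_real t * c1"
    "(deriv ^^ 2) F 0 / 2 = (4 * complex_of_real t ^ 2 - 1) * c1^2 + 2 * complex_of_real t * c2"
proof -
  obtain \<omega> where \<omega>: "\<omega> holomorphic_on ball 0 1" "\<omega> 0 = 0"
    and \<omega>_disc: "\<And>z. z \<in> ball 0 1 \<Longrightarrow> norm (\<omega> z) < 1"
    and F: "\<And>z. z \<in> ball 0 1 \<Longrightarrow> F z = cheb_H t (\<omega> z)"
    using assms(1) unfolding subordinate_def by blast
  have into: "\<omega> ` ball 0 1 \<subseteq> ball 0 1"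
    using \<omega>_disc by auto
  note H = holomorphic_cheb_H[OF assms(2)]
  have H\<omega>: "(\<lambda>z. cheb_H t (\<omega> z)) holomorphic_on ball 0 1"
    using holomorphic_on_compose_gen[OF \<omega>(1) H into] by (simp add: o_def)
  have "F holomorphic_on ball 0 1"
    by (rule holomorphic_transform[OF H\<omega>]) (simp add: F)
  then have F_eq: "(deriv ^^ n) F 0 = (deriv ^^ n) (\<lambda>z. cheb_H t (\<omega> z)) 0" for n
    by (rule higher_deriv_transform_within_open[OF _ H\<omega>]) (simp_all add: F)
  have "norm ((deriv ^^ 2) \<omega> 0) \<le> fact 2"
    using \<omega>(1) \<omega>_disc by (intro self_map_disc_higher_deriv_bound) (auto intro: less_imp_le)
  then have "norm ((deriv ^^ 2) \<omega> 0 / 2) \<le> 1"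
    by (simp add: norm_divide)
  moreover have "deriv F 0 = 2 * complex_of_real t * deriv \<omega> 0"
    using F_eq[of 1] deriv_compose_holomorphic[OF _ _ \<omega>(1) H into] \<omega>(2)
    by (simp add: deriv_cheb_H_0)
  moreover have "(deriv ^^ 2) F 0 / 2 = (4 * complex_of_real t ^ 2 - 1) * (deriv \<omega> 0)^2
                   + 2 * complex_of_real t * ((deriv ^^ 2) \<omega> 0 / 2)"
    using F_eq[of 2] higher_deriv2_compose_holomorphic[OF _ _ \<omega>(1) H into] \<omega>(2)
    by (simp add: deriv_cheb_H_0 higher_deriv2_cheb_H_0[OF assms(2)])
  ultimately show ?thesis
    using that by blast
qed

lemma univalent_inverse_ext_coeffs:
  assumes "normalized_analytic f" "univalent_inverse_ext f g"
  shows "coeff_a g 2 = - coeff_a f 2" "coeff_a g 3 = 2 * coeff_a f 2 ^ 2 - coeff_a f 3"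
proof -
  have f: "f holomorphic_on ball 0 1" "deriv f 0 = 1"
    using assms(1) by (auto simp: normalized_analytic_def)
  obtain r where r: "r > 0" "\<And>w. w \<in> ball 0 r \<Longrightarrow> f (g w) = w"
    and g: "g holomorphic_on ball 0 1" "g 0 = 0"
    using assms(2) unfolding univalent_inverse_ext_def by blast
  define S where "S = ball 0 (min r 1) \<inter> g -` ball 0 1"
  have S: "open S" "0 \<in> S" "g holomorphic_on S" "g ` S \<subseteq> ball 0 1"
    using r g unfolding S_def
    by (auto intro!: continuous_open_preimage holomorphic_on_imp_continuous_on
             intro: holomorphic_on_subset[OF g(1)])
  have "(deriv ^^ n) (\<lambda>w. f (g w)) 0 = (deriv ^^ n) (\<lambda>w. w) 0" for n
    using holomorphic_on_compose_gen[OF S(3) f(1) S(4)] r S(1,2)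
    by (intro higher_deriv_transform_within_open[of _ S]) (auto simp: S_def o_def)
  note id_derivs = this[of 1] this[of 2] this[of 3]
  note chain = deriv_compose_holomorphic[OF S(1) _ S(3) f(1) S(4,2)]
    higher_deriv2_compose_holomorphic[OF S(1) _ S(3) f(1) S(4,2)]
    higher_deriv3_compose_holomorphic[OF S(1) _ S(3) f(1) S(4,2)]
  have g1: "deriv g 0 = 1"
    using id_derivs(1) chain(1) g(2) f(2) by simp
  have g2: "(deriv ^^ 2) g 0 = - (deriv ^^ 2) f 0"
    using id_derivs(2) chain(2) g(2) g1 f(2) by (simp add: eq_neg_iff_add_eq_0 add.commute)
  have g3: "(deriv ^^ 3) g 0 = 3 * ((deriv ^^ 2) f 0)^2 - (deriv ^^ 3) f 0"
    using id_derivs(3) chain(3) g(2) g1 g2 f(2)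
    by (simp add: power2_eq_square algebra_simps eq_neg_iff_add_eq_0)
  show "coeff_a g 2 = - coeff_a f 2" "coeff_a g 3 = 2 * coeff_a f 2 ^ 2 - coeff_a f 3"
    using g2 g3 by (simp_all add: coeff_a_def fact_numeral power2_eq_square field_simps)
qed

lemma derivs_exp_compose_at_0:
  fixes L :: "complex \<Rightarrow> complex"
  assumes L: "L holomorphic_on S" "open S" "0 \<in> S" "L 0 = 0"
  shows "deriv (\<lambda>z. exp (c * L z)) 0 = c * deriv L 0"
    and "(deriv ^^ 2) (\<lambda>z. exp (c * L z)) 0 = (c * deriv L 0)^2 + c * (deriv ^^ 2) L 0"
proof -
  have deriv_exp: "deriv exp = (exp :: complex \<Rightarrow> complex)"
    by (rule ext, rule DERIV_imp_deriv, rule DERIV_exp)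
  have cL: "(\<lambda>z. c * L z) holomorphic_on S"
    using L(1) by (intro holomorphic_intros)
  have "deriv (\<lambda>z. c * L z) 0 = c * deriv L 0"
    using higher_deriv_cmult[OF L(1,3,2), of 1] by simp
  moreover have "(deriv ^^ 2) (\<lambda>z. c * L z) 0 = c * (deriv ^^ 2) L 0"
    by (rule higher_deriv_cmult[OF L(1,3,2)])
  moreover note deriv_compose_holomorphic[OF L(2) open_UNIV cL holomorphic_on_exp _ L(3)]
    higher_deriv2_compose_holomorphic[OF L(2) open_UNIV cL holomorphic_on_exp _ L(3)]
  ultimately show "deriv (\<lambda>z. exp (c * L z)) 0 = c * deriv L 0"
    "(deriv ^^ 2) (\<lambda>z. exp (c * L z)) 0 = (c * deriv L 0)^2 + c * (deriv ^^ 2) L 0"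
    by (simp_all add: L(4) deriv_exp numeral_2_eq_2)
qed

lemma quotient_log_coeffs:
  assumes "quotient_log h L" "h holomorphic_on ball 0 1" "h 0 = 0"
  shows "deriv h 0 = 1" "deriv L 0 = coeff_a h 2"
    and "(deriv ^^ 2) L 0 = 2 * coeff_a h 3 - coeff_a h 2 ^ 2"
proof -
  have L: "L holomorphic_on ball 0 1" "L 0 = 0"
    and exp_L: "\<And>z. z \<in> ball 0 1 \<Longrightarrow> z \<noteq> 0 \<Longrightarrow> exp (L z) = h z / z"
    using assms(1) by (auto simp: quotient_log_def)
  define E where "E = (\<lambda>z. exp (L z))"
  have E: "E holomorphic_on ball 0 1"
    unfolding E_def using L(1) by (intro holomorphic_intros)
  have "h z = z * E z" if "z \<in> ball 0 1" for z
    using exp_L[OF that] assms(3) by (cases "z = 0") (simp_all add: E_def)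
  then have "(deriv ^^ n) h 0 = (deriv ^^ n) (\<lambda>z. z * E z) 0" for n
    using E by (intro higher_deriv_transform_within_open[OF assms(2)]) (auto intro: holomorphic_intros)
  also have "\<dots> n = (\<Sum>i = 0..n. of_nat (n choose i) * (deriv ^^ i) (\<lambda>z. z) 0
                                  * (deriv ^^ (n - i)) E 0)" for n
    by (rule higher_deriv_mult[OF _ E]) auto
  finally have h: "(deriv ^^ n) h 0 = (\<Sum>i = 0..n. of_nat (n choose i) * (deriv ^^ i) (\<lambda>z. z) 0
                                                   * (deriv ^^ (n - i)) E 0)" for n .
  note E_derivs = derivs_exp_compose_at_0[OF L(1) _ _ L(2), of 1, simplified, folded E_def]
  show "deriv h 0 = 1"
    using h[of 1] by (simp add: E_def L(2))
  show "deriv L 0 = coeff_a h 2"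
    using h[of 2] E_derivs by (simp add: coeff_a_def numeral_2_eq_2)
  show "(deriv ^^ 2) L 0 = 2 * coeff_a h 3 - coeff_a h 2 ^ 2"
    using h[of 2] h[of 3] E_derivs
    by (simp add: coeff_a_def fact_numeral numeral_3_eq_3 numeral_2_eq_2 power2_eq_square field_simps)
qed

lemma higher_deriv_B_op:
  fixes lam \<mu> \<delta> :: real
  assumes h: "h holomorphic_on S" and L: "L holomorphic_on S" and S: "open S" "z \<in> S"
  shows "(deriv ^^ n) (B_op lam \<mu> \<delta> h L) z =
      (1 - complex_of_real lam) * (deriv ^^ n) (\<lambda>w. exp (complex_of_real \<mu> * L w)) z
      + complex_of_real lam * (\<Sum>i = 0..n. of_nat (n choose i) * (deriv ^^ i) (deriv h) z
                                  * (deriv ^^ (n - i)) (\<lambda>w. exp (complex_of_real (\<mu> - 1) * L w)) z)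
      + complex_of_real (xi_par lam \<mu> * \<delta>) * (\<Sum>i = 0..n. of_nat (n choose i) * (deriv ^^ i) (\<lambda>w. w) z
                                  * (deriv ^^ (n - i)) ((deriv ^^ 2) h) z)"
proof -
  have E: "(\<lambda>w. exp (complex_of_real a * L w)) holomorphic_on S" for a
    using L by (intro holomorphic_intros)
  have dh: "deriv h holomorphic_on S" and d2h: "(deriv ^^ 2) h holomorphic_on S"
    using h S by (auto intro: holomorphic_deriv holomorphic_higher_deriv)
  have "B_op lam \<mu> \<delta> h L = (\<lambda>w. ((1 - complex_of_real lam) * exp (complex_of_real \<mu> * L w)
          + complex_of_real lam * (deriv h w * exp (complex_of_real (\<mu> - 1) * L w)))
          + complex_of_real (xi_par lam \<mu> * \<delta>) * (w * (deriv ^^ 2) h w))"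
    by (rule ext) (simp add: B_op_def algebra_simps del: of_real_diff of_real_mult)
  then show ?thesis
    using E dh d2h
    by (simp add: higher_deriv_add[OF _ _ S] higher_deriv_cmult[OF _ S(2,1)]
          higher_deriv_mult[OF dh E S] higher_deriv_mult[OF _ d2h S] holomorphic_intros
          del: of_real_diff of_real_mult)
qed

lemma B_op_derivs_at_0:
  fixes lam \<mu> \<delta> :: real
  assumes qL: "quotient_log h L" and h: "h holomorphic_on ball 0 1" "h 0 = 0"
  defines "\<xi> \<equiv> xi_par lam \<mu>"
  shows "deriv (B_op lam \<mu> \<delta> h L) 0 = complex_of_real (lam + \<mu> + 2*\<xi>*\<delta>) * coeff_a h 2"
    and "(deriv ^^ 2) (B_op lam \<mu> \<delta> h L) 0 / 2
           = complex_of_real (2*lam + \<mu> + 6*\<xi>*\<delta>) * coeff_a h 3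
             + complex_of_real ((2*lam + \<mu>) * (\<mu> - 1) / 2) * coeff_a h 2 ^ 2"
proof -
  have L: "L holomorphic_on ball 0 1" "L 0 = 0"
    using qL by (auto simp: quotient_log_def)
  define E where "E a = (\<lambda>w. exp (complex_of_real a * L w))" for a
  have "0 \<in> ball (0::complex) 1"
    by simp
  note B_op_derivs = higher_deriv_B_op[OF h(1) L(1) open_ball this, of _ lam \<mu> \<delta>, folded \<xi>_def E_def]
  define a2 where "a2 = coeff_a h 2"
  define a3 where "a3 = coeff_a h 3"
  have h_derivs: "deriv h 0 = 1" "(deriv ^^ 2) h 0 = 2 * a2" "(deriv ^^ 3) h 0 = 6 * a3"
    using quotient_log_coeffs(1)[OF qL h] by (simp_all add: a2_def a3_def coeff_a_def fact_numeral)
  have exp_derivs: "E a 0 = 1" "deriv (E a) 0 = complex_of_real a * a2"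
    "(deriv ^^ 2) (E a) 0 = (complex_of_real a * a2)^2 + complex_of_real a * (2 * a3 - a2^2)" for a
    using derivs_exp_compose_at_0[OF L(1) open_ball _ L(2)] quotient_log_coeffs[OF qL h] L(2)
    by (simp_all add: E_def a2_def a3_def)
  show "deriv (B_op lam \<mu> \<delta> h L) 0 = complex_of_real (lam + \<mu> + 2*\<xi>*\<delta>) * coeff_a h 2"
    unfolding a2_def[symmetric] using B_op_derivs[of 1] h_derivs exp_derivs
    by (simp add: numeral_2_eq_2 algebra_simps)
  show "(deriv ^^ 2) (B_op lam \<mu> \<delta> h L) 0 / 2
          = complex_of_real (2*lam + \<mu> + 6*\<xi>*\<delta>) * coeff_a h 3
            + complex_of_real ((2*lam + \<mu>) * (\<mu> - 1) / 2) * coeff_a h 2 ^ 2"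
    unfolding a2_def[symmetric] a3_def[symmetric] using B_op_derivs[of 2] h_derivs exp_derivs
    by (simp add: numeral_2_eq_2 numeral_3_eq_3) (simp add: field_simps power2_eq_square)
qed

lemma B_subord_coeffs:
  fixes lam \<mu> \<delta> t :: real
  assumes "B_subord lam \<mu> \<delta> t h" "h holomorphic_on ball 0 1" "h 0 = 0" "\<bar>t\<bar> \<le> 1"
  defines "\<xi> \<equiv> xi_par lam \<mu>"
  obtains c1 c2 where "norm c2 \<le> 1"
    "complex_of_real (lam + \<mu> + 2*\<xi>*\<delta>) * coeff_a h 2 = 2 * complex_of_real t * c1"
    "complex_of_real (2*lam + \<mu> + 6*\<xi>*\<delta>) * coeff_a h 3
       + complex_of_real ((2*lam + \<mu>) * (\<mu> - 1) / 2) * coeff_a h 2 ^ 2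
       = (4 * complex_of_real t ^ 2 - 1) * c1^2 + 2 * complex_of_real t * c2"
proof -
  obtain L where L: "quotient_log h L" and sub: "subordinate (B_op lam \<mu> \<delta> h L) (cheb_H t)"
    using assms(1) by (auto simp: B_subord_def)
  obtain c1 c2 where "norm c2 \<le> 1" "deriv (B_op lam \<mu> \<delta> h L) 0 = 2 * complex_of_real t * c1"
    "(deriv ^^ 2) (B_op lam \<mu> \<delta> h L) 0 / 2
       = (4 * complex_of_real t ^ 2 - 1) * c1^2 + 2 * complex_of_real t * c2"
    using subordinate_cheb_H_coeffs[OF sub assms(4)] by blast
  with B_op_derivs_at_0[OF L assms(2,3), of lam \<mu> \<delta>] show ?thesis
    using that unfolding \<xi>_def by metis
qed

lemma bi_coeff_identities:
  fixes A B C t a2 a3 c1 c2 d1 d2 :: "'a :: field_char_0"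
  assumes f1: "A * a2 = 2 * t * c1"
    and f2: "B * a3 + C * a2^2 = (4 * t^2 - 1) * c1^2 + 2 * t * c2"
    and g1: "A * (- a2) = 2 * t * d1"
    and g2: "B * (2 * a2^2 - a3) + C * a2^2 = (4 * t^2 - 1) * d1^2 + 2 * t * d2"
    and t: "t \<noteq> 0"
  shows "B * (a3 - a2^2) = t * (c2 - d2)"
    and "(4 * (B + C) * t^2 - (4 * t^2 - 1) * A^2) * a2^2 = 4 * t^3 * (c2 + d2)"
proof -
  have "(d1 + c1) * (2 * t) = 0"
    using f1 g1 by algebra
  then have d1: "d1 = - c1"
    using t by (simp add: eq_neg_iff_add_eq_0)
  show "B * (a3 - a2^2) = t * (c2 - d2)"
    using f2 g2 unfolding d1 by algebra
  show "(4 * (B + C) * t^2 - (4 * t^2 - 1) * A^2) * a2^2 = 4 * t^3 * (c2 + d2)"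
    using f1 f2 g2 unfolding d1 by algebra
qed

lemma norm_real_combination_le:
  fixes c d :: complex
  assumes "norm c \<le> 1" "norm d \<le> 1"
  shows "norm (complex_of_real u * c + complex_of_real v * d) \<le> \<bar>u\<bar> + \<bar>v\<bar>"
proof -
  have "norm (complex_of_real u * c + complex_of_real v * d) \<le> \<bar>u\<bar> * norm c + \<bar>v\<bar> * norm d"
    by (metis norm_mult norm_of_real norm_triangle_ineq)
  also have "\<dots> \<le> \<bar>u\<bar> + \<bar>v\<bar>"
    using assms by (intro add_mono mult_left_le) auto
  finally show ?thesis .
qed

lemma abs_add_abs_diff_eq_max:
  fixes x b :: "'a :: linordered_idom"
  assumes "b \<ge> 0"
  shows "\<bar>x + b\<bar> + \<bar>x - b\<bar> = 2 * max \<bar>x\<bar> b"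
  using assms by (auto simp: max_def abs_if)

lemma fekete_szego_max_bound:
  fixes A B C t \<eta> D :: real and a2 a3 c1 c2 d1 d2 :: complex
  assumes f1: "complex_of_real A * a2 = 2 * complex_of_real t * c1"
    and f2: "complex_of_real B * a3 + complex_of_real C * a2^2
               = (4 * complex_of_real t ^ 2 - 1) * c1^2 + 2 * complex_of_real t * c2"
    and g1: "complex_of_real A * (- a2) = 2 * complex_of_real t * d1"
    and g2: "complex_of_real B * (2 * a2^2 - a3) + complex_of_real C * a2^2
               = (4 * complex_of_real t ^ 2 - 1) * d1^2 + 2 * complex_of_real t * d2"
    and c2: "norm c2 \<le> 1" and d2: "norm d2 \<le> 1" and pos: "B > 0" "t > 0"
    and D: "D = 4 * (B + C) * t^2 - (4 * t^2 - 1) * A^2" and nondeg: "D \<noteq> 0 \<or> \<eta> = 1"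
  shows "norm (a3 - complex_of_real \<eta> * a2^2) \<le> 2 * t * max (4 * t^2 * \<bar>\<eta> - 1\<bar> / \<bar>D\<bar>) (1 / B)"
proof -
  \<comment> \<open>for \<open>D = 0\<close> we have \<open>\<eta> = 1\<close>, and \<open>k = 0\<close> by the convention \<open>x / 0 = 0\<close>\<close>
  define k where "k = 4 * t^2 * (1 - \<eta>) / D"
  have "complex_of_real t \<noteq> 0"
    using pos by simp
  note ids = bi_coeff_identities[OF f1 f2 g1 g2 this]
  have f_eq: "a3 - a2^2 = complex_of_real (t / B) * (c2 - d2)"
    using ids(1) pos by (simp add: field_simps)
  have g_eq: "(1 - complex_of_real \<eta>) * a2^2 = complex_of_real (t * k) * (c2 + d2)"
  proof (cases "\<eta> = 1")
    case False
    then have "D \<noteq> 0" using nondeg by blast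
    have "complex_of_real D * a2^2 = 4 * complex_of_real t ^ 3 * (c2 + d2)"
      using ids(2) unfolding D by simp
    then have a2_sq: "a2^2 = 4 * complex_of_real t ^ 3 * (c2 + d2) / complex_of_real D"
      using \<open>D \<noteq> 0\<close> by (simp add: field_simps)
    show ?thesis
      unfolding a2_sq k_def using \<open>D \<noteq> 0\<close> by (simp add: field_simps power3_eq_cube power2_eq_square)
  qed (simp add: k_def)
  have "a3 - complex_of_real \<eta> * a2^2 = (a3 - a2^2) + (1 - complex_of_real \<eta>) * a2^2"
    by (simp add: algebra_simps)
  also have "\<dots> = complex_of_real (t * (k + 1 / B)) * c2 + complex_of_real (t * (k - 1 / B)) * d2"
    unfolding f_eq g_eq using pos by (simp add: field_simps)
  finally have "a3 - complex_of_real \<eta> * a2^2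
      = complex_of_real (t * (k + 1 / B)) * c2 + complex_of_real (t * (k - 1 / B)) * d2" .
  then have "norm (a3 - complex_of_real \<eta> * a2^2) \<le> \<bar>t * (k + 1 / B)\<bar> + \<bar>t * (k - 1 / B)\<bar>"
    by (metis norm_real_combination_le[OF c2 d2])
  also have "\<dots> = t * (\<bar>k + 1 / B\<bar> + \<bar>k - 1 / B\<bar>)"
    unfolding abs_mult abs_of_pos[OF pos(2)] by (rule distrib_left[symmetric])
  also have "\<bar>k + 1 / B\<bar> + \<bar>k - 1 / B\<bar> = 2 * max \<bar>k\<bar> (1 / B)"
    using pos by (simp add: abs_add_abs_diff_eq_max)
  also have "\<bar>k\<bar> = 4 * t^2 * \<bar>\<eta> - 1\<bar> / \<bar>D\<bar>"
    by (simp add: k_def abs_mult abs_divide abs_minus_commute)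
  finally show ?thesis
    by (simp add: mult.assoc)
qed

lemma fekete_szego_bound_cases:
  fixes A B C t \<eta> D M :: real and a2 a3 c1 c2 d1 d2 :: complex
  assumes f1: "complex_of_real A * a2 = 2 * complex_of_real t * c1"
    and f2: "complex_of_real B * a3 + complex_of_real C * a2^2
               = (4 * complex_of_real t ^ 2 - 1) * c1^2 + 2 * complex_of_real t * c2"
    and g1: "complex_of_real A * (- a2) = 2 * complex_of_real t * d1"
    and g2: "complex_of_real B * (2 * a2^2 - a3) + complex_of_real C * a2^2
               = (4 * complex_of_real t ^ 2 - 1) * d1^2 + 2 * complex_of_real t * d2"
    and c2: "norm c2 \<le> 1" and d2: "norm d2 \<le> 1" and pos: "B > 0" "t > 0"
    and D: "D = 4 * (B + C) * t^2 - (4 * t^2 - 1) * A^2" and M: "M = \<bar>D\<bar> / (4 * B * t^2)"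
  shows "(\<bar>\<eta> - 1\<bar> \<le> M \<longrightarrow> norm (a3 - complex_of_real \<eta> * a2^2) \<le> 2 * t / B)
       \<and> (\<bar>\<eta> - 1\<bar> \<ge> M \<and> D \<noteq> 0 \<longrightarrow>
            norm (a3 - complex_of_real \<eta> * a2^2) \<le> 8 * \<bar>\<eta> - 1\<bar> * t^3 / \<bar>D\<bar>)"
proof -
  note bound = fekete_szego_max_bound[OF f1 f2 g1 g2 c2 d2 pos D]
  have threshold: "4 * t^2 * \<bar>\<eta> - 1\<bar> / \<bar>D\<bar> \<le> 1 / B \<longleftrightarrow> \<bar>\<eta> - 1\<bar> \<le> M"
    and threshold': "1 / B \<le> 4 * t^2 * \<bar>\<eta> - 1\<bar> / \<bar>D\<bar> \<longleftrightarrow> M \<le> \<bar>\<eta> - 1\<bar>" if "D \<noteq> 0"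
    using that pos unfolding M by (simp_all add: field_simps)
  show ?thesis
  proof (intro conjI impI)
    assume small: "\<bar>\<eta> - 1\<bar> \<le> M"
    show "norm (a3 - complex_of_real \<eta> * a2^2) \<le> 2 * t / B"
    proof (cases "D = 0")
      case True
      then have "\<eta> = 1"
        using small unfolding M by simp
      then show ?thesis
        using bound[of 1] pos by (simp add: max_def)
    next
      case False
      then show ?thesis
        using bound[of \<eta>] threshold small by (simp add: max_def)
    qed
  next
    assume large: "\<bar>\<eta> - 1\<bar> \<ge> M \<and> D \<noteq> 0"
    then have "max (4 * t^2 * \<bar>\<eta> - 1\<bar> / \<bar>D\<bar>) (1 / B) = 4 * t^2 * \<bar>\<eta> - 1\<bar> / \<bar>D\<bar>"
      using threshold' by (auto simp: max_def)
    then show "norm (a3 - complex_of_real \<eta> * a2^2) \<le> 8 * \<bar>\<eta> - 1\<bar> * t^3 / \<bar>D\<bar>"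
      using bound[of \<eta>] large by (simp add: power3_eq_cube power2_eq_square mult_ac)
  qed
qed

theorem theorem2:
  fixes lam \<mu> \<delta> t \<eta> :: real and f :: "complex \<Rightarrow> complex"
  assumes "lam \<ge> 1" "\<mu> \<ge> 0" "\<delta> \<ge> 0" "1/2 < t" "t < 1"
    and "f \<in> B_class \<mu> lam \<delta> t"
  defines "\<xi> \<equiv> xi_par lam \<mu>"
  defines "D \<equiv> (lam + \<mu> + 2*\<xi>*\<delta>)^2
      - 2 * (2 * (lam + \<mu> + 2*\<xi>*\<delta>)^2 - ((2*lam + \<mu>) * (\<mu> + 1) + 12*\<xi>*\<delta>)) * t^2"
  defines "M \<equiv> \<bar>D\<bar> / (4 * (2*lam + \<mu> + 6*\<xi>*\<delta>) * t^2)"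
  shows "(\<bar>\<eta> - 1\<bar> \<le> M \<longrightarrow>
           cmod (coeff_a f 3 - complex_of_real \<eta> * (coeff_a f 2)^2) \<le> 2*t / (2*lam + \<mu> + 6*\<xi>*\<delta>))
       \<and> (\<bar>\<eta> - 1\<bar> \<ge> M \<and> D \<noteq> 0 \<longrightarrow>
           cmod (coeff_a f 3 - complex_of_real \<eta> * (coeff_a f 2)^2) \<le> 8 * \<bar>\<eta> - 1\<bar> * t^3 / \<bar>D\<bar>)"
proof -
  obtain g where "bi_univalent f" and inv: "univalent_inverse_ext f g"
    and sub_f: "B_subord lam \<mu> \<delta> t f" and sub_g: "B_subord lam \<mu> \<delta> t g"
    using assms(6) unfolding B_class_def by blast
  then have f: "normalized_analytic f"
    by (simp add: bi_univalent_def)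
  have t: "\<bar>t\<bar> \<le> 1" "t > 0"
    using assms(4,5) by auto
  define A where "A = lam + \<mu> + 2*\<xi>*\<delta>"
  define B where "B = 2*lam + \<mu> + 6*\<xi>*\<delta>"
  define C where "C = (2*lam + \<mu>) * (\<mu> - 1) / 2"
  have "B > 0"
    using assms(1-3) by (simp add: B_def \<xi>_def xi_par_def add_pos_nonneg)
  obtain c1 c2 where c: "norm c2 \<le> 1" "complex_of_real A * coeff_a f 2 = 2 * complex_of_real t * c1"
    "complex_of_real B * coeff_a f 3 + complex_of_real C * coeff_a f 2 ^ 2
       = (4 * complex_of_real t ^ 2 - 1) * c1^2 + 2 * complex_of_real t * c2"
    using B_subord_coeffs[OF sub_f _ _ t(1)] f
    unfolding A_def B_def C_def \<xi>_def normalized_analytic_def by blast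
  obtain d1 d2 where d: "norm d2 \<le> 1" "complex_of_real A * (- coeff_a f 2) = 2 * complex_of_real t * d1"
    "complex_of_real B * (2 * coeff_a f 2 ^ 2 - coeff_a f 3) + complex_of_real C * coeff_a f 2 ^ 2
       = (4 * complex_of_real t ^ 2 - 1) * d1^2 + 2 * complex_of_real t * d2"
    using B_subord_coeffs[OF sub_g _ _ t(1)] inv univalent_inverse_ext_coeffs[OF f inv]
    unfolding A_def B_def C_def \<xi>_def univalent_inverse_ext_def by (metis power2_minus)
  have "D = 4 * (B + C) * t^2 - (4 * t^2 - 1) * A^2"
    unfolding D_def A_def B_def C_def by (simp add: field_simps power2_eq_square)
  from fekete_szego_bound_cases[OF c(2,3) d(2,3) c(1) d(1) \<open>B > 0\<close> t(2) this, of M \<eta>]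
  show ?thesis
    unfolding M_def B_def by (simp add: mult_ac)
qed

end
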